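(* Let $R$ be a ring and $n\ge 1$ an integer. Then $R$ is NJ-symmetric if and only if the ring $T_n(R)$ of $n\times n$ upper triangular matrices over $R$ is NJ-symmetric.
   Context: Rings are associative with identity. $N(S)$ is the set of nilpotent elements, $J(S)$ the Jacobson radical of a ring $S$. $S$ is NJ-symmetric if for all $a,b,c\in S$, $abc\in N(S)$ implies $bac\in J(S)$. *)

theory Defs
  imports "HOL-Algebra.Ideal"
begin

definition nilpotents :: "('a, 'b) ring_scheme \<Rightarrow> 'a set" where
  "nilpotents S = {x \<in> carrier S. \<exists>k::nat. x [^]\<^bsub>S\<^esub> k = \<zero>\<^bsub>S\<^esub>}"

definition left_ideal :: "'a set \<Rightarrow> ('a, 'b) ring_scheme \<Rightarrow> bool" where
  "left_ideal I S \<longleftrightarrow> additive_subgroup I S \<and>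
     (\<forall>r \<in> carrier S. \<forall>x \<in> I. r \<otimes>\<^bsub>S\<^esub> x \<in> I)"

definition maximal_left_ideal :: "'a set \<Rightarrow> ('a, 'b) ring_scheme \<Rightarrow> bool" where
  "maximal_left_ideal I S \<longleftrightarrow> left_ideal I S \<and> I \<noteq> carrier S \<and>
     (\<forall>J. left_ideal J S \<and> I \<subseteq> J \<longrightarrow> J = I \<or> J = carrier S)"

text \<open>Jacobson radical J(S): intersection of all maximal left ideals
  (equal to the whole ring if there are none, i.e. for the zero ring).\<close>
definition jacobson :: "('a, 'b) ring_scheme \<Rightarrow> 'a set" where
  "jacobson S = carrier S \<inter> \<Inter> {I. maximal_left_ideal I S}"

definition NJ_symmetric :: "('a, 'b) ring_scheme \<Rightarrow> bool" where
  "NJ_symmetric S \<longleftrightarrow> (\<forall>a \<in> carrier S. \<forall>b \<in> carrier S. \<forall>c \<in> carrier S.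
     a \<otimes>\<^bsub>S\<^esub> b \<otimes>\<^bsub>S\<^esub> c \<in> nilpotents S \<longrightarrow>
     b \<otimes>\<^bsub>S\<^esub> a \<otimes>\<^bsub>S\<^esub> c \<in> jacobson S)"

text \<open>The ring T_n(R) of n x n upper triangular matrices over R.
  Matrices are functions nat => nat => 'a; entries with indices outside
  {0..<n} or below the diagonal are zero.\<close>
definition upper_tri :: "nat \<Rightarrow> ('a, 'b) ring_scheme \<Rightarrow> (nat \<Rightarrow> nat \<Rightarrow> 'a) ring" where
  "upper_tri n R =
    \<lparr> carrier = {A. \<forall>i j. (i < n \<and> j < n \<and> i \<le> j \<longrightarrow> A i j \<in> carrier R) \<and>
                         (\<not> (i < n \<and> j < n \<and> i \<le> j) \<longrightarrow> A i j = \<zero>\<^bsub>R\<^esub>)},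
      monoid.mult = (\<lambda>A B i j. if i < n \<and> j < n \<and> i \<le> j
                        then (\<Oplus>\<^bsub>R\<^esub>k\<in>{..<n}. A i k \<otimes>\<^bsub>R\<^esub> B k j) else \<zero>\<^bsub>R\<^esub>),
      one = (\<lambda>i j. if i < n \<and> i = j then \<one>\<^bsub>R\<^esub> else \<zero>\<^bsub>R\<^esub>),
      zero = (\<lambda>i j. \<zero>\<^bsub>R\<^esub>),
      add = (\<lambda>A B i j. A i j \<oplus>\<^bsub>R\<^esub> B i j) \<rparr>"

end

theory Submission
  imports Defs
begin

text \<open>An upper triangular matrix is left invertible exactly when its diagonal entries are:
  multiplying by a diagonal matrix of left inverses turns it into \<open>1 - N\<close> with \<open>N\<close> strictly
  upper triangular, hence nilpotent. Since \<open>x \<in> J(S)\<close> iff every \<open>1 - y x\<close> is left invertible,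
  \<open>J(T\<^sub>n(R))\<close> consists of the upper triangular matrices with diagonal in \<open>J(R)\<close>.
  The diagonal of a product is the product of the diagonals, so nilpotency of \<open>A B C\<close>
  passes to each \<open>a\<^sub>i\<^sub>i b\<^sub>i\<^sub>i c\<^sub>i\<^sub>i\<close>, and NJ-symmetry of \<open>R\<close> puts the diagonal of
  \<open>B A C\<close> into \<open>J(R)\<close>. Conversely, \<open>R\<close> embeds into \<open>T\<^sub>n(R)\<close> as scalar matrices, and
  the corner entry of a scalar matrix in \<open>J(T\<^sub>n(R))\<close> lies in \<open>J(R)\<close>.\<close>

section \<open>Left ideals and the Jacobson radical\<close>

definition left_invertible :: "('a, 'b) monoid_scheme \<Rightarrow> 'a \<Rightarrow> bool" where
  "left_invertible S x \<longleftrightarrow> (\<exists>z \<in> carrier S. z \<otimes>\<^bsub>S\<^esub> x = \<one>\<^bsub>S\<^esub>)"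

context ring
begin

lemma left_idealD:
  assumes "left_ideal I R"
  shows "I \<subseteq> carrier R" "\<zero> \<in> I" "\<And>a b. a \<in> I \<Longrightarrow> b \<in> I \<Longrightarrow> a \<oplus> b \<in> I"
    "\<And>r x. r \<in> carrier R \<Longrightarrow> x \<in> I \<Longrightarrow> r \<otimes> x \<in> I"
proof -
  have "additive_subgroup I R" using assms unfolding left_ideal_def by blast
  then show "I \<subseteq> carrier R" "\<zero> \<in> I" "\<And>a b. a \<in> I \<Longrightarrow> b \<in> I \<Longrightarrow> a \<oplus> b \<in> I"
    by (simp_all add: additive_subgroup.a_subset additive_subgroup.zero_closed additive_subgroup.a_closed)
  show "\<And>r x. r \<in> carrier R \<Longrightarrow> x \<in> I \<Longrightarrow> r \<otimes> x \<in> I"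
    using assms unfolding left_ideal_def by blast
qed

lemma left_idealI:
  assumes "I \<subseteq> carrier R" "\<zero> \<in> I" "\<And>a b. a \<in> I \<Longrightarrow> b \<in> I \<Longrightarrow> a \<oplus> b \<in> I"
    and mult_closed: "\<And>r x. r \<in> carrier R \<Longrightarrow> x \<in> I \<Longrightarrow> r \<otimes> x \<in> I"
  shows "left_ideal I R"
proof -
  have "subgroup I (add_monoid R)"
  proof (rule subgroup.intro)
    fix x assume x: "x \<in> I"
    then have "inv\<^bsub>add_monoid R\<^esub> x = (\<ominus> \<one>) \<otimes> x"
      using assms(1) by (auto simp: a_inv_def[symmetric] l_minus)
    then show "inv\<^bsub>add_monoid R\<^esub> x \<in> I" using mult_closed x by simp
  qed (use assms in auto)
  then show ?thesis unfolding left_ideal_def using mult_closed by (simp add: additive_subgroupI)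
qed

lemma left_ideal_one_imp_carrier:
  assumes "left_ideal I R" "\<one> \<in> I"
  shows "I = carrier R"
  using left_idealD[OF assms(1)] assms(2) by (metis r_one subsetI subset_antisym)

lemma left_ideal_Union_chain:
  assumes "C \<noteq> {}" "chain\<^sub>\<subseteq> C" and ideals: "\<And>X. X \<in> C \<Longrightarrow> left_ideal X R"
  shows "left_ideal (\<Union>C) R"
proof (rule left_idealI)
  obtain X0 where "X0 \<in> C" using assms(1) by blast
  then show "\<zero> \<in> \<Union>C" using left_idealD(2)[OF ideals] by blast
  show "\<Union>C \<subseteq> carrier R" using left_idealD(1)[OF ideals] by blast
  show "r \<otimes> x \<in> \<Union>C" if r: "r \<in> carrier R" and x: "x \<in> \<Union>C" for r x
  proof -
    obtain X where "X \<in> C" "x \<in> X" using x by blast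
    then show ?thesis using left_idealD(4)[OF ideals r] by blast
  qed
  show "a \<oplus> b \<in> \<Union>C" if a: "a \<in> \<Union>C" and b: "b \<in> \<Union>C" for a b
  proof -
    obtain X Y where XY: "X \<in> C" "Y \<in> C" "a \<in> X" "b \<in> Y" using a b by blast
    from XY(1,2) \<open>chain\<^sub>\<subseteq> C\<close> have "X \<subseteq> Y \<or> Y \<subseteq> X"
      unfolding chain_subset_def by blast
    then show ?thesis
      using XY left_idealD(3)[OF ideals[OF XY(1)]] left_idealD(3)[OF ideals[OF XY(2)]] by blast
  qed
qed

lemma exists_maximal_left_ideal:
  assumes "left_ideal L R" "\<one> \<notin> L"
  shows "\<exists>M. maximal_left_ideal M R \<and> L \<subseteq> M"
proof -
  define A where "A = {I. left_ideal I R \<and> L \<subseteq> I \<and> \<one> \<notin> I}"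
  have "\<forall>C\<in>chains A. \<exists>U\<in>A. \<forall>X\<in>C. X \<subseteq> U"
  proof
    fix C assume C: "C \<in> chains A"
    show "\<exists>U\<in>A. \<forall>X\<in>C. X \<subseteq> U"
    proof (cases "C = {}")
      case True
      have "L \<in> A" using assms unfolding A_def by simp
      then show ?thesis using True by blast
    next
      case False
      have CA: "C \<subseteq> A" and chain: "chain\<^sub>\<subseteq> C" using C unfolding chains_def by auto
      have "left_ideal (\<Union>C) R"
        using CA by (intro left_ideal_Union_chain[OF False chain]) (auto simp: A_def)
      moreover have "L \<subseteq> \<Union>C" "\<one> \<notin> \<Union>C" using CA False unfolding A_def by auto
      ultimately have "\<Union>C \<in> A" unfolding A_def by simp
      then show ?thesis by (intro bexI[of _ "\<Union>C"]) auto
    qed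
  qed
  then obtain M where M: "M \<in> A" "\<And>X. X \<in> A \<Longrightarrow> M \<subseteq> X \<Longrightarrow> X = M"
    by (metis Zorn_Lemma2)
  have "maximal_left_ideal M R"
    unfolding maximal_left_ideal_def
  proof (intro conjI allI impI)
    show "left_ideal M R" "M \<noteq> carrier R" using M(1) unfolding A_def by auto
    fix J assume J: "left_ideal J R \<and> M \<subseteq> J"
    show "J = M \<or> J = carrier R"
    proof (cases "\<one> \<in> J")
      case True
      then show ?thesis using J left_ideal_one_imp_carrier by blast
    next
      case False
      then have "J \<in> A" using J M(1) unfolding A_def by blast
      then show ?thesis using J M(2) by blast
    qed
  qed
  with M(1) show ?thesis unfolding A_def by blast
qed

lemma left_ideal_principal:
  assumes "u \<in> carrier R"
  shows "left_ideal {r \<otimes> u | r. r \<in> carrier R} R"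
proof (rule left_idealI)
  show "\<zero> \<in> {r \<otimes> u | r. r \<in> carrier R}"
    using assms by (auto intro!: exI[of _ \<zero>])
  show "a \<oplus> b \<in> {r \<otimes> u | r. r \<in> carrier R}"
    if "a \<in> {r \<otimes> u | r. r \<in> carrier R}" "b \<in> {r \<otimes> u | r. r \<in> carrier R}" for a b
    using that assms by (auto simp: l_distr[symmetric])
  show "r \<otimes> a \<in> {r \<otimes> u | r. r \<in> carrier R}"
    if "r \<in> carrier R" "a \<in> {r \<otimes> u | r. r \<in> carrier R}" for r a
    using that assms by (auto simp: m_assoc[symmetric])
qed (use assms in auto)

lemma left_ideal_add_principal:
  assumes "left_ideal M R" "x \<in> carrier R"
  shows "left_ideal {m \<oplus> y \<otimes> x | m y. m \<in> M \<and> y \<in> carrier R} R"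
    (is "left_ideal ?L R")
proof (rule left_idealI)
  note M = left_idealD[OF assms(1)]
  show "?L \<subseteq> carrier R" using M(1) assms(2) by auto
  have "\<zero> = \<zero> \<oplus> \<zero> \<otimes> x" using assms(2) by simp
  then show "\<zero> \<in> ?L" using M(2) by blast
  show "a \<oplus> b \<in> ?L" if a: "a \<in> ?L" and b: "b \<in> ?L" for a b
  proof -
    obtain m1 y1 m2 y2 where my: "a = m1 \<oplus> y1 \<otimes> x" "b = m2 \<oplus> y2 \<otimes> x" "m1 \<in> M" "m2 \<in> M"
      "y1 \<in> carrier R" "y2 \<in> carrier R" using a b by auto
    then have "a \<oplus> b = (m1 \<oplus> m2) \<oplus> (y1 \<oplus> y2) \<otimes> x"
      using assms(2) M(1) by (simp add: l_distr subsetD a_ac)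
    then show ?thesis using my M(3) by blast
  qed
  show "r \<otimes> a \<in> ?L" if r: "r \<in> carrier R" and a: "a \<in> ?L" for r a
  proof -
    obtain m y where my: "a = m \<oplus> y \<otimes> x" "m \<in> M" "y \<in> carrier R" using a by auto
    then have "r \<otimes> a = r \<otimes> m \<oplus> (r \<otimes> y) \<otimes> x"
      using r assms(2) M(1) by (simp add: r_distr m_assoc subsetD)
    then show ?thesis using my M(4) r by blast
  qed
qed

lemma jacobson_imp_left_invertible:
  assumes x: "x \<in> jacobson R" and y: "y \<in> carrier R"
  shows "left_invertible R (\<one> \<ominus> y \<otimes> x)"
proof (rule ccontr)
  define u where "u = \<one> \<ominus> y \<otimes> x"
  have xc: "x \<in> carrier R" using x unfolding jacobson_def by blast
  then have uc: "u \<in> carrier R" using y unfolding u_def by simp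
  assume "\<not> left_invertible R u"
  then have "\<one> \<notin> {r \<otimes> u | r. r \<in> carrier R}" unfolding left_invertible_def by auto
  then obtain M where M: "maximal_left_ideal M R" "{r \<otimes> u | r. r \<in> carrier R} \<subseteq> M"
    using exists_maximal_left_ideal[OF left_ideal_principal[OF uc]] by blast
  have lM: "left_ideal M R" using M(1) unfolding maximal_left_ideal_def by blast
  have "x \<in> M" using x M(1) unfolding jacobson_def by blast
  then have "y \<otimes> x \<in> M" using left_idealD(4)[OF lM y] by blast
  moreover have "u \<in> M" using M(2) uc by (force intro: exI[of _ \<one>])
  ultimately have "u \<oplus> y \<otimes> x \<in> M" using left_idealD(3)[OF lM] by blast
  moreover have "u \<oplus> y \<otimes> x = \<one>" unfolding u_def using xc y by (simp add: a_minus_def a_assoc l_neg)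
  ultimately have "M = carrier R" using left_ideal_one_imp_carrier[OF lM] by simp
  then show False using M(1) unfolding maximal_left_ideal_def by blast
qed

lemma left_invertible_imp_jacobson:
  assumes xc: "x \<in> carrier R" and inv: "\<And>y. y \<in> carrier R \<Longrightarrow> left_invertible R (\<one> \<ominus> y \<otimes> x)"
  shows "x \<in> jacobson R"
proof -
  have "x \<in> M" if M: "maximal_left_ideal M R" for M
  proof (rule ccontr)
    assume "x \<notin> M"
    have lM: "left_ideal M R" using M unfolding maximal_left_ideal_def by blast
    note Md = left_idealD[OF lM]
    define L where "L = {m \<oplus> y \<otimes> x | m y. m \<in> M \<and> y \<in> carrier R}"
    have "M \<subseteq> L"
    proof
      fix m assume "m \<in> M"
      moreover have "m = m \<oplus> \<zero> \<otimes> x" using calculation xc Md(1) by auto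
      ultimately show "m \<in> L" unfolding L_def by blast
    qed
    moreover have "x \<in> L"
    proof -
      have "x = \<zero> \<oplus> \<one> \<otimes> x" using xc by simp
      then show ?thesis unfolding L_def using Md(2) by blast
    qed
    ultimately have "L = carrier R"
      using M left_ideal_add_principal[OF lM xc] \<open>x \<notin> M\<close> unfolding maximal_left_ideal_def L_def
      by blast
    then obtain m y where my: "\<one> = m \<oplus> y \<otimes> x" "m \<in> M" "y \<in> carrier R" unfolding L_def by blast
    then have "\<one> \<ominus> y \<otimes> x = m" using xc Md(1) by (auto simp: a_minus_def a_assoc r_neg)
    then obtain z where "z \<in> carrier R" "z \<otimes> m = \<one>"
      using inv[OF my(3)] unfolding left_invertible_def by auto
    then have "\<one> \<in> M" using Md(4) my(2) by metis
    then show False using left_ideal_one_imp_carrier[OF lM] M unfolding maximal_left_ideal_def by blast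
  qed
  then show ?thesis unfolding jacobson_def using xc by blast
qed

lemma jacobson_iff_left_invertible:
  "x \<in> jacobson R \<longleftrightarrow> x \<in> carrier R \<and> (\<forall>y \<in> carrier R. left_invertible R (\<one> \<ominus> y \<otimes> x))"
  using jacobson_imp_left_invertible left_invertible_imp_jacobson
  by (auto simp: jacobson_def)

lemma left_invertible_one_minus_nilpotent:
  assumes N: "N \<in> carrier R" and k: "N [^] (k::nat) = \<zero>"
  shows "left_invertible R (\<one> \<ominus> N)"
proof -
  \<comment> \<open>The witness for \<open>m\<close> is the geometric sum \<open>1 + N + \<dots> + N\<^sup>m\<^sup>-\<^sup>1\<close>.\<close>
  have "\<exists>z\<in>carrier R. z \<otimes> (\<one> \<ominus> N) = \<one> \<ominus> N [^] m" for m :: nat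
  proof (induction m)
    case 0
    show ?case using N by (intro bexI[of _ \<zero>]) (auto simp: a_minus_def r_neg)
  next
    case (Suc m)
    then obtain z where z: "z \<in> carrier R" "z \<otimes> (\<one> \<ominus> N) = \<one> \<ominus> N [^] m" by blast
    have "(z \<oplus> N [^] m) \<otimes> (\<one> \<ominus> N) = z \<otimes> (\<one> \<ominus> N) \<oplus> N [^] m \<otimes> (\<one> \<ominus> N)"
      using z N by (simp add: l_distr)
    also have "\<dots> = (\<one> \<ominus> N [^] m) \<oplus> (N [^] m \<ominus> N [^] Suc m)"
      using z N by (simp add: a_minus_def r_distr r_minus nat_pow_Suc)
    also have "\<dots> = \<one> \<ominus> N [^] Suc m"
      using N by (simp add: a_minus_def a_assoc r_neg1 del: nat_pow_Suc)
    finally show ?case using z N by (intro bexI[of _ "z \<oplus> N [^] m"]) auto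
  qed
  from this[of k] show ?thesis using k unfolding left_invertible_def by (simp add: a_minus_def)
qed

end

section \<open>The ring of upper triangular matrices\<close>

context abelian_monoid
begin

lemma finsum_swap:
  assumes "finite A" "finite B" "\<And>k l. f k l \<in> carrier G"
  shows "(\<Oplus>k\<in>A. \<Oplus>l\<in>B. f k l) = (\<Oplus>l\<in>B. \<Oplus>k\<in>A. f k l)"
  using assms(1)
proof (induction A rule: finite_induct)
  case empty
  then show ?case by simp
next
  case (insert a A)
  have "(\<Oplus>k\<in>insert a A. \<Oplus>l\<in>B. f k l) = (\<Oplus>l\<in>B. f a l) \<oplus> (\<Oplus>l\<in>B. \<Oplus>k\<in>A. f k l)"
    using insert assms by (simp add: finsum_insert)
  also have "\<dots> = (\<Oplus>l\<in>B. f a l \<oplus> (\<Oplus>k\<in>A. f k l))"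
    using assms by (simp add: finsum_addf)
  also have "\<dots> = (\<Oplus>l\<in>B. \<Oplus>k\<in>insert a A. f k l)"
    using insert assms by (intro finsum_cong') (auto simp: finsum_insert)
  finally show ?case .
qed

lemma finsum_eq_single:
  assumes "finite A" "i \<in> A" "\<And>k. k \<in> A \<Longrightarrow> k \<noteq> i \<Longrightarrow> f k = \<zero>" "\<And>k. k \<in> A \<Longrightarrow> f k \<in> carrier G"
  shows "(\<Oplus>k\<in>A. f k) = f i"
proof -
  have "(\<Oplus>k\<in>A. f k) = (\<Oplus>k\<in>A. if i = k then f k else \<zero>)"
    using assms by (intro finsum_cong') auto
  also have "\<dots> = f i" using assms by (intro finsum_singleton) auto
  finally show ?thesis .
qed

lemma finsum_neutral:
  assumes "\<And>k. k \<in> A \<Longrightarrow> f k = \<zero>"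
  shows "(\<Oplus>k\<in>A. f k) = \<zero>"
proof -
  have "(\<Oplus>k\<in>A. f k) = (\<Oplus>k\<in>A. \<zero>)" using assms by (intro finsum_cong') auto
  then show ?thesis by simp
qed

end

definition diag_mat :: "nat \<Rightarrow> ('a, 'b) ring_scheme \<Rightarrow> (nat \<Rightarrow> 'a) \<Rightarrow> nat \<Rightarrow> nat \<Rightarrow> 'a" where
  "diag_mat n R d = (\<lambda>i j. if i < n \<and> i = j then d i else \<zero>\<^bsub>R\<^esub>)"

lemma diag_mat_apply: "diag_mat n R d i j = (if i < n \<and> i = j then d i else \<zero>\<^bsub>R\<^esub>)"
  by (simp add: diag_mat_def)

context ring
begin

lemma upper_tri_entry_closed: "A \<in> carrier (upper_tri n R) \<Longrightarrow> A i j \<in> carrier R"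
  unfolding upper_tri_def by (cases "i < n \<and> j < n \<and> i \<le> j") auto

lemma upper_tri_entry_zero:
  "A \<in> carrier (upper_tri n R) \<Longrightarrow> \<not> (i < n \<and> j < n \<and> i \<le> j) \<Longrightarrow> A i j = \<zero>"
  unfolding upper_tri_def by auto

lemma upper_tri_mult_apply:
  assumes A: "A \<in> carrier (upper_tri n R)" and B: "B \<in> carrier (upper_tri n R)"
  shows "(A \<otimes>\<^bsub>upper_tri n R\<^esub> B) i j = (if i < n \<and> j < n then (\<Oplus>k\<in>{..<n}. A i k \<otimes> B k j) else \<zero>)"
proof (cases "i < n \<and> j < n \<and> j < i")
  case True
  have "A i k \<otimes> B k j = \<zero>" for k
    using True upper_tri_entry_zero[OF A, of i k] upper_tri_entry_zero[OF B, of k j]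
      upper_tri_entry_closed[OF A] upper_tri_entry_closed[OF B]
    by (cases "k < i") auto
  then show ?thesis using True by (simp add: upper_tri_def finsum_neutral)
next
  case False
  then show ?thesis by (auto simp: upper_tri_def)
qed

lemma diag_mat_closed:
  "(\<And>i. i < n \<Longrightarrow> d i \<in> carrier R) \<Longrightarrow> diag_mat n R d \<in> carrier (upper_tri n R)"
  unfolding diag_mat_def upper_tri_def by auto

lemma one_upper_tri: "\<one>\<^bsub>upper_tri n R\<^esub> = diag_mat n R (\<lambda>_. \<one>)"
  by (simp add: upper_tri_def diag_mat_def)

lemma zero_upper_tri: "\<zero>\<^bsub>upper_tri n R\<^esub> = (\<lambda>i j. \<zero>)"
  by (simp add: upper_tri_def)

lemma upper_tri_one_closed: "\<one>\<^bsub>upper_tri n R\<^esub> \<in> carrier (upper_tri n R)"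
  unfolding one_upper_tri by (rule diag_mat_closed) simp

lemma upper_tri_mult_closed:
  assumes A: "A \<in> carrier (upper_tri n R)" and B: "B \<in> carrier (upper_tri n R)"
  shows "A \<otimes>\<^bsub>upper_tri n R\<^esub> B \<in> carrier (upper_tri n R)"
  using upper_tri_entry_closed[OF A] upper_tri_entry_closed[OF B]
  by (auto simp: upper_tri_def intro!: finsum_closed)

lemma diag_mat_mult_left:
  assumes d: "\<And>i. i < n \<Longrightarrow> d i \<in> carrier R" and B: "B \<in> carrier (upper_tri n R)"
  shows "diag_mat n R d \<otimes>\<^bsub>upper_tri n R\<^esub> B = (\<lambda>i j. if i < n then d i \<otimes> B i j else \<zero>)"
proof (intro ext)
  fix i j
  have D: "diag_mat n R d \<in> carrier (upper_tri n R)" by (rule diag_mat_closed) (rule d)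
  have "(\<Oplus>k\<in>{..<n}. diag_mat n R d i k \<otimes> B k j) = diag_mat n R d i i \<otimes> B i j" if "i < n"
    using that d upper_tri_entry_closed[OF B]
    by (intro finsum_eq_single) (auto simp: diag_mat_apply)
  then show "(diag_mat n R d \<otimes>\<^bsub>upper_tri n R\<^esub> B) i j = (if i < n then d i \<otimes> B i j else \<zero>)"
    unfolding upper_tri_mult_apply[OF D B]
    using d upper_tri_entry_zero[OF B, of i j] by (auto simp: diag_mat_apply)
qed

lemma diag_mat_mult_right:
  assumes d: "\<And>i. i < n \<Longrightarrow> d i \<in> carrier R" and B: "B \<in> carrier (upper_tri n R)"
  shows "B \<otimes>\<^bsub>upper_tri n R\<^esub> diag_mat n R d = (\<lambda>i j. if j < n then B i j \<otimes> d j else \<zero>)"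
proof (intro ext)
  fix i j
  have D: "diag_mat n R d \<in> carrier (upper_tri n R)" by (rule diag_mat_closed) (rule d)
  have "(\<Oplus>k\<in>{..<n}. B i k \<otimes> diag_mat n R d k j) = B i j \<otimes> diag_mat n R d j j" if "j < n"
    using that d upper_tri_entry_closed[OF B]
    by (intro finsum_eq_single) (auto simp: diag_mat_apply)
  then show "(B \<otimes>\<^bsub>upper_tri n R\<^esub> diag_mat n R d) i j = (if j < n then B i j \<otimes> d j else \<zero>)"
    unfolding upper_tri_mult_apply[OF B D]
    using d upper_tri_entry_zero[OF B, of i j] by (auto simp: diag_mat_apply)
qed

lemma upper_tri_mult_assoc:
  assumes A: "A \<in> carrier (upper_tri n R)" and B: "B \<in> carrier (upper_tri n R)"
    and C: "C \<in> carrier (upper_tri n R)"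
  shows "(A \<otimes>\<^bsub>upper_tri n R\<^esub> B) \<otimes>\<^bsub>upper_tri n R\<^esub> C =
         A \<otimes>\<^bsub>upper_tri n R\<^esub> (B \<otimes>\<^bsub>upper_tri n R\<^esub> C)"
proof (intro ext)
  fix i j
  note closed = upper_tri_entry_closed[OF A] upper_tri_entry_closed[OF B] upper_tri_entry_closed[OF C]
  note AB = upper_tri_mult_closed[OF A B] and BC = upper_tri_mult_closed[OF B C]
  show "((A \<otimes>\<^bsub>upper_tri n R\<^esub> B) \<otimes>\<^bsub>upper_tri n R\<^esub> C) i j =
      (A \<otimes>\<^bsub>upper_tri n R\<^esub> (B \<otimes>\<^bsub>upper_tri n R\<^esub> C)) i j"
  proof (cases "i < n \<and> j < n")
    case True
    have "((A \<otimes>\<^bsub>upper_tri n R\<^esub> B) \<otimes>\<^bsub>upper_tri n R\<^esub> C) i j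
        = (\<Oplus>k\<in>{..<n}. (\<Oplus>l\<in>{..<n}. A i l \<otimes> B l k) \<otimes> C k j)"
      using True closed unfolding upper_tri_mult_apply[OF AB C] if_P[OF True]
      by (intro finsum_cong') (auto simp: upper_tri_mult_apply[OF A B] intro!: finsum_closed)
    also have "\<dots> = (\<Oplus>k\<in>{..<n}. \<Oplus>l\<in>{..<n}. A i l \<otimes> B l k \<otimes> C k j)"
      using closed by (intro finsum_cong') (auto simp: finsum_ldistr)
    also have "\<dots> = (\<Oplus>l\<in>{..<n}. \<Oplus>k\<in>{..<n}. A i l \<otimes> B l k \<otimes> C k j)"
      using closed by (intro finsum_swap) auto
    also have "\<dots> = (\<Oplus>l\<in>{..<n}. A i l \<otimes> (\<Oplus>k\<in>{..<n}. B l k \<otimes> C k j))"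
      using closed by (intro finsum_cong') (auto simp: finsum_rdistr m_assoc)
    also have "\<dots> = (A \<otimes>\<^bsub>upper_tri n R\<^esub> (B \<otimes>\<^bsub>upper_tri n R\<^esub> C)) i j"
      using True closed unfolding upper_tri_mult_apply[OF A BC] if_P[OF True]
      by (intro finsum_cong') (auto simp: upper_tri_mult_apply[OF B C] intro!: finsum_closed)
    finally show ?thesis .
  next
    case False
    then show ?thesis by (auto simp: upper_tri_mult_apply[OF AB C] upper_tri_mult_apply[OF A BC])
  qed
qed

lemma upper_tri_one_mult:
  assumes B: "B \<in> carrier (upper_tri n R)"
  shows "\<one>\<^bsub>upper_tri n R\<^esub> \<otimes>\<^bsub>upper_tri n R\<^esub> B = B"
proof -
  have "(\<lambda>i j. if i < n then \<one> \<otimes> B i j else \<zero>) = B"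
    using upper_tri_entry_closed[OF B] upper_tri_entry_zero[OF B] by (intro ext) auto
  then show ?thesis unfolding one_upper_tri by (simp add: diag_mat_mult_left B)
qed

lemma upper_tri_mult_one:
  assumes B: "B \<in> carrier (upper_tri n R)"
  shows "B \<otimes>\<^bsub>upper_tri n R\<^esub> \<one>\<^bsub>upper_tri n R\<^esub> = B"
proof -
  have "(\<lambda>i j. if j < n then B i j \<otimes> \<one> else \<zero>) = B"
    using upper_tri_entry_closed[OF B] upper_tri_entry_zero[OF B] by (intro ext) auto
  then show ?thesis unfolding one_upper_tri by (simp add: diag_mat_mult_right B)
qed

lemma upper_tri_add_closed:
  assumes A: "A \<in> carrier (upper_tri n R)" and B: "B \<in> carrier (upper_tri n R)"
  shows "A \<oplus>\<^bsub>upper_tri n R\<^esub> B \<in> carrier (upper_tri n R)"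
  using upper_tri_entry_closed[OF A] upper_tri_entry_closed[OF B]
    upper_tri_entry_zero[OF A] upper_tri_entry_zero[OF B]
  by (auto simp: upper_tri_def)

lemma abelian_group_upper_tri: "abelian_group (upper_tri n R)"
proof (rule abelian_groupI)
  fix A assume A: "A \<in> carrier (upper_tri n R)"
  note entries = upper_tri_entry_closed[OF A] upper_tri_entry_zero[OF A]
  show "\<zero>\<^bsub>upper_tri n R\<^esub> \<oplus>\<^bsub>upper_tri n R\<^esub> A = A"
    using entries by (simp add: upper_tri_def)
  have "(\<lambda>i j. \<ominus> A i j) \<in> carrier (upper_tri n R)"
    using entries by (auto simp: upper_tri_def)
  moreover have "(\<lambda>i j. \<ominus> A i j) \<oplus>\<^bsub>upper_tri n R\<^esub> A = \<zero>\<^bsub>upper_tri n R\<^esub>"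
    using entries by (simp add: upper_tri_def l_neg)
  ultimately show "\<exists>B\<in>carrier (upper_tri n R). B \<oplus>\<^bsub>upper_tri n R\<^esub> A = \<zero>\<^bsub>upper_tri n R\<^esub>"
    by blast
  fix B assume B: "B \<in> carrier (upper_tri n R)"
  show "A \<oplus>\<^bsub>upper_tri n R\<^esub> B \<in> carrier (upper_tri n R)" using A B by (rule upper_tri_add_closed)
  show "A \<oplus>\<^bsub>upper_tri n R\<^esub> B = B \<oplus>\<^bsub>upper_tri n R\<^esub> A"
    using entries upper_tri_entry_closed[OF B] by (simp add: upper_tri_def a_comm)
  fix C assume C: "C \<in> carrier (upper_tri n R)"
  show "A \<oplus>\<^bsub>upper_tri n R\<^esub> B \<oplus>\<^bsub>upper_tri n R\<^esub> C
      = A \<oplus>\<^bsub>upper_tri n R\<^esub> (B \<oplus>\<^bsub>upper_tri n R\<^esub> C)"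
    using entries upper_tri_entry_closed[OF B] upper_tri_entry_closed[OF C]
    by (simp add: upper_tri_def a_assoc)
qed (simp add: upper_tri_def)

lemma ring_upper_tri: "ring (upper_tri n R)"
proof (rule ringI[OF abelian_group_upper_tri])
  show "monoid (upper_tri n R)"
    by (rule monoidI)
      (auto simp: upper_tri_mult_closed upper_tri_one_closed upper_tri_mult_assoc
        upper_tri_one_mult upper_tri_mult_one)
  fix A B C
  assume "A \<in> carrier (upper_tri n R)" "B \<in> carrier (upper_tri n R)" "C \<in> carrier (upper_tri n R)"
  then have entries: "A i j \<in> carrier R" "B i j \<in> carrier R" "C i j \<in> carrier R" for i j
    by (simp_all add: upper_tri_entry_closed)
  show "(A \<oplus>\<^bsub>upper_tri n R\<^esub> B) \<otimes>\<^bsub>upper_tri n R\<^esub> C =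
      A \<otimes>\<^bsub>upper_tri n R\<^esub> C \<oplus>\<^bsub>upper_tri n R\<^esub> B \<otimes>\<^bsub>upper_tri n R\<^esub> C"
    using entries by (intro ext) (simp add: upper_tri_def l_distr finsum_addf)
  show "C \<otimes>\<^bsub>upper_tri n R\<^esub> (A \<oplus>\<^bsub>upper_tri n R\<^esub> B) =
      C \<otimes>\<^bsub>upper_tri n R\<^esub> A \<oplus>\<^bsub>upper_tri n R\<^esub> C \<otimes>\<^bsub>upper_tri n R\<^esub> B"
    using entries by (intro ext) (simp add: upper_tri_def r_distr finsum_addf)
qed

lemma upper_tri_minus_apply:
  assumes A: "A \<in> carrier (upper_tri n R)" and B: "B \<in> carrier (upper_tri n R)"
  shows "(A \<ominus>\<^bsub>upper_tri n R\<^esub> B) i j = A i j \<ominus> B i j"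
proof -
  interpret T: ring "upper_tri n R" by (rule ring_upper_tri)
  have "(\<lambda>i j. \<ominus> B i j) \<in> carrier (upper_tri n R)"
    using upper_tri_entry_closed[OF B] upper_tri_entry_zero[OF B] by (auto simp: upper_tri_def)
  moreover have "(\<lambda>i j. \<ominus> B i j) \<oplus>\<^bsub>upper_tri n R\<^esub> B = \<zero>\<^bsub>upper_tri n R\<^esub>"
    using upper_tri_entry_closed[OF B] by (simp add: upper_tri_def l_neg)
  ultimately have "\<ominus>\<^bsub>upper_tri n R\<^esub> B = (\<lambda>i j. \<ominus> B i j)"
    using T.minus_equality B by blast
  then show ?thesis by (simp add: a_minus_def upper_tri_def)
qed

lemma upper_tri_mult_diag:
  assumes A: "A \<in> carrier (upper_tri n R)" and B: "B \<in> carrier (upper_tri n R)" and i: "i < n"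
  shows "(A \<otimes>\<^bsub>upper_tri n R\<^esub> B) i i = A i i \<otimes> B i i"
proof -
  have "(\<Oplus>k\<in>{..<n}. A i k \<otimes> B k i) = A i i \<otimes> B i i"
  proof (rule finsum_eq_single)
    fix k assume "k \<in> {..<n}" "k \<noteq> i"
    then show "A i k \<otimes> B k i = \<zero>"
      using upper_tri_entry_zero[OF A, of i k] upper_tri_entry_zero[OF B, of k i]
        upper_tri_entry_closed[OF A] upper_tri_entry_closed[OF B]
      by (cases "k < i") auto
  qed (use i upper_tri_entry_closed[OF A] upper_tri_entry_closed[OF B] in auto)
  then show ?thesis using i by (simp add: upper_tri_mult_apply[OF A B])
qed

lemma upper_tri_pow_diag:
  assumes A: "A \<in> carrier (upper_tri n R)" and i: "i < n"
  shows "(A [^]\<^bsub>upper_tri n R\<^esub> (k::nat)) i i = A i i [^] k"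
proof (induction k)
  case 0
  then show ?case using i by (simp add: one_upper_tri diag_mat_apply)
next
  case (Suc k)
  interpret T: ring "upper_tri n R" by (rule ring_upper_tri)
  show ?case using Suc upper_tri_mult_diag[OF T.nat_pow_closed[OF A] A i] by simp
qed

lemma diag_mat_mult:
  assumes "\<And>i. i < n \<Longrightarrow> d i \<in> carrier R" "\<And>i. i < n \<Longrightarrow> e i \<in> carrier R"
  shows "diag_mat n R d \<otimes>\<^bsub>upper_tri n R\<^esub> diag_mat n R e = diag_mat n R (\<lambda>i. d i \<otimes> e i)"
proof -
  have "diag_mat n R e \<in> carrier (upper_tri n R)" by (rule diag_mat_closed) (rule assms(2))
  then show ?thesis
    using assms(1) by (subst diag_mat_mult_left) (auto simp: diag_mat_apply intro!: ext)
qed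

lemma diag_mat_pow:
  assumes "\<And>i. i < n \<Longrightarrow> d i \<in> carrier R"
  shows "diag_mat n R d [^]\<^bsub>upper_tri n R\<^esub> (k::nat) = diag_mat n R (\<lambda>i. d i [^] k)"
proof (induction k)
  case 0
  then show ?case by (simp add: one_upper_tri)
next
  case (Suc k)
  then show ?case using assms by (simp add: diag_mat_mult)
qed

section \<open>The Jacobson radical of upper triangular matrices\<close>

lemma upper_tri_pow_zero_below:
  assumes N: "N \<in> carrier (upper_tri n R)" and diag: "\<And>i. i < n \<Longrightarrow> N i i = \<zero>"
  shows "j < i + k \<Longrightarrow> (N [^]\<^bsub>upper_tri n R\<^esub> (k::nat)) i j = \<zero>"
proof (induction k arbitrary: j)
  case 0
  then show ?case by (simp add: one_upper_tri diag_mat_apply)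
next
  case (Suc k)
  interpret T: ring "upper_tri n R" by (rule ring_upper_tri)
  have Nk: "N [^]\<^bsub>upper_tri n R\<^esub> k \<in> carrier (upper_tri n R)" using N by simp
  have "(\<Oplus>l\<in>{..<n}. (N [^]\<^bsub>upper_tri n R\<^esub> k) i l \<otimes> N l j) = \<zero>"
  proof (rule finsum_neutral)
    fix l assume "l \<in> {..<n}"
    show "(N [^]\<^bsub>upper_tri n R\<^esub> k) i l \<otimes> N l j = \<zero>"
    proof (cases "l < i + k")
      case True
      then show ?thesis using Suc.IH upper_tri_entry_closed[OF N] by simp
    next
      case False
      then have "j < l \<or> j = l" using Suc.prems by arith
      then have "N l j = \<zero>" using diag \<open>l \<in> {..<n}\<close> upper_tri_entry_zero[OF N, of l j] by auto
      then show ?thesis using upper_tri_entry_closed[OF Nk] by simp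
    qed
  qed
  then show ?case by (simp add: upper_tri_mult_apply[OF Nk N])
qed

lemma upper_tri_pow_eq_zero:
  assumes N: "N \<in> carrier (upper_tri n R)" and diag: "\<And>i. i < n \<Longrightarrow> N i i = \<zero>"
  shows "N [^]\<^bsub>upper_tri n R\<^esub> n = \<zero>\<^bsub>upper_tri n R\<^esub>"
proof (intro ext)
  interpret T: ring "upper_tri n R" by (rule ring_upper_tri)
  fix i j
  have "N [^]\<^bsub>upper_tri n R\<^esub> n \<in> carrier (upper_tri n R)" using N by simp
  then have "(N [^]\<^bsub>upper_tri n R\<^esub> n) i j = \<zero>"
    using upper_tri_pow_zero_below[OF N diag, of j i n] upper_tri_entry_zero[of _ n i j]
    by (cases "j < n") auto
  then show "(N [^]\<^bsub>upper_tri n R\<^esub> n) i j = \<zero>\<^bsub>upper_tri n R\<^esub> i j"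
    by (simp add: zero_upper_tri)
qed

lemma left_invertible_upper_tri:
  assumes U: "U \<in> carrier (upper_tri n R)" and diag: "\<And>i. i < n \<Longrightarrow> left_invertible R (U i i)"
  shows "left_invertible (upper_tri n R) U"
proof -
  interpret T: ring "upper_tri n R" by (rule ring_upper_tri)
  obtain d where d: "\<And>i. i < n \<Longrightarrow> d i \<in> carrier R \<and> d i \<otimes> U i i = \<one>"
    using diag unfolding left_invertible_def by metis
  define D where "D = diag_mat n R d"
  have D: "D \<in> carrier (upper_tri n R)" unfolding D_def by (rule diag_mat_closed) (use d in blast)
  define N where "N = \<one>\<^bsub>upper_tri n R\<^esub> \<ominus>\<^bsub>upper_tri n R\<^esub> D \<otimes>\<^bsub>upper_tri n R\<^esub> U"
  have N: "N \<in> carrier (upper_tri n R)" unfolding N_def using D U by simp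
  have "N i i = \<zero>" if i: "i < n" for i
  proof -
    have "(D \<otimes>\<^bsub>upper_tri n R\<^esub> U) i i = \<one>"
      using upper_tri_mult_diag[OF D U i] d i by (simp add: D_def diag_mat_apply)
    then show ?thesis
      unfolding N_def upper_tri_minus_apply[OF upper_tri_one_closed T.m_closed[OF D U]]
      using i by (simp add: one_upper_tri diag_mat_apply a_minus_def r_neg)
  qed
  then have "N [^]\<^bsub>upper_tri n R\<^esub> n = \<zero>\<^bsub>upper_tri n R\<^esub>" by (rule upper_tri_pow_eq_zero[OF N])
  then obtain Z where Z: "Z \<in> carrier (upper_tri n R)"
    "Z \<otimes>\<^bsub>upper_tri n R\<^esub> (\<one>\<^bsub>upper_tri n R\<^esub> \<ominus>\<^bsub>upper_tri n R\<^esub> N) = \<one>\<^bsub>upper_tri n R\<^esub>"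
    using T.left_invertible_one_minus_nilpotent[OF N] unfolding left_invertible_def by blast
  have "\<one>\<^bsub>upper_tri n R\<^esub> \<ominus>\<^bsub>upper_tri n R\<^esub> N = D \<otimes>\<^bsub>upper_tri n R\<^esub> U"
    unfolding N_def using D U by (simp add: a_minus_def T.minus_add T.r_neg2)
  then have "(Z \<otimes>\<^bsub>upper_tri n R\<^esub> D) \<otimes>\<^bsub>upper_tri n R\<^esub> U = \<one>\<^bsub>upper_tri n R\<^esub>"
    using Z D U by (simp add: T.m_assoc)
  then show ?thesis unfolding left_invertible_def using Z D by blast
qed

lemma left_invertible_upper_tri_diag:
  assumes "left_invertible (upper_tri n R) U" "U \<in> carrier (upper_tri n R)" "i < n"
  shows "left_invertible R (U i i)"
proof -
  obtain Z where Z: "Z \<in> carrier (upper_tri n R)" "Z \<otimes>\<^bsub>upper_tri n R\<^esub> U = \<one>\<^bsub>upper_tri n R\<^esub>"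
    using assms(1) unfolding left_invertible_def by blast
  then have "Z i i \<otimes> U i i = \<one>"
    using upper_tri_mult_diag[OF Z(1) assms(2,3)] assms(3) by (simp add: one_upper_tri diag_mat_apply)
  then show ?thesis unfolding left_invertible_def using upper_tri_entry_closed[OF Z(1)] by blast
qed

lemma left_invertible_upper_tri_iff:
  "U \<in> carrier (upper_tri n R) \<Longrightarrow>
    left_invertible (upper_tri n R) U \<longleftrightarrow> (\<forall>i < n. left_invertible R (U i i))"
  using left_invertible_upper_tri left_invertible_upper_tri_diag by blast

lemma upper_tri_one_minus_mult_diag:
  assumes Y: "Y \<in> carrier (upper_tri n R)" and A: "A \<in> carrier (upper_tri n R)" and i: "i < n"
  shows "(\<one>\<^bsub>upper_tri n R\<^esub> \<ominus>\<^bsub>upper_tri n R\<^esub> Y \<otimes>\<^bsub>upper_tri n R\<^esub> A) i i = \<one> \<ominus> Y i i \<otimes> A i i"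
  using upper_tri_minus_apply[OF upper_tri_one_closed upper_tri_mult_closed[OF Y A]]
    upper_tri_mult_diag[OF Y A i] i
  by (simp add: one_upper_tri diag_mat_apply)

lemma jacobson_upper_tri:
  "A \<in> jacobson (upper_tri n R) \<longleftrightarrow>
    A \<in> carrier (upper_tri n R) \<and> (\<forall>i < n. A i i \<in> jacobson R)"
proof -
  interpret T: ring "upper_tri n R" by (rule ring_upper_tri)
  have "A \<in> jacobson (upper_tri n R) \<longleftrightarrow> A \<in> carrier (upper_tri n R) \<and>
      (\<forall>Y \<in> carrier (upper_tri n R). \<forall>i < n. left_invertible R (\<one> \<ominus> Y i i \<otimes> A i i))"
    by (auto simp: T.jacobson_iff_left_invertible left_invertible_upper_tri_iff
        upper_tri_one_minus_mult_diag)
  also have "\<dots> \<longleftrightarrow> A \<in> carrier (upper_tri n R) \<and>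
      (\<forall>i < n. \<forall>y \<in> carrier R. left_invertible R (\<one> \<ominus> y \<otimes> A i i))"
  proof -
    have "Y i i \<in> carrier R" if "Y \<in> carrier (upper_tri n R)" for Y i
      using that by (rule upper_tri_entry_closed)
    moreover have "diag_mat n R (\<lambda>_. y) \<in> carrier (upper_tri n R)" if "y \<in> carrier R" for y
      by (rule diag_mat_closed) (rule that)
    moreover have "diag_mat n R (\<lambda>_. y) i i = y" if "i < n" for y i
      using that by (simp add: diag_mat_apply)
    ultimately show ?thesis by metis
  qed
  also have "\<dots> \<longleftrightarrow> A \<in> carrier (upper_tri n R) \<and> (\<forall>i < n. A i i \<in> jacobson R)"
    by (auto simp: jacobson_iff_left_invertible upper_tri_entry_closed)
  finally show ?thesis .
qed

section \<open>Transfer of NJ-symmetry\<close>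

lemma upper_tri_nilpotent_diag:
  assumes "A \<in> nilpotents (upper_tri n R)" "i < n"
  shows "A i i \<in> nilpotents R"
proof -
  obtain k where A: "A \<in> carrier (upper_tri n R)" and k: "A [^]\<^bsub>upper_tri n R\<^esub> (k::nat) = \<zero>\<^bsub>upper_tri n R\<^esub>"
    using assms(1) unfolding nilpotents_def by blast
  then have "A i i [^] k = \<zero>"
    using upper_tri_pow_diag[OF A assms(2), of k] by (simp add: zero_upper_tri)
  then show ?thesis unfolding nilpotents_def using upper_tri_entry_closed[OF A] by blast
qed

lemma diag_mat_nilpotent:
  assumes "s \<in> nilpotents R"
  shows "diag_mat n R (\<lambda>_. s) \<in> nilpotents (upper_tri n R)"
proof -
  obtain k where s: "s \<in> carrier R" and k: "s [^] (k::nat) = \<zero>"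
    using assms unfolding nilpotents_def by blast
  then have "diag_mat n R (\<lambda>_. s) [^]\<^bsub>upper_tri n R\<^esub> k = \<zero>\<^bsub>upper_tri n R\<^esub>"
    by (simp add: diag_mat_pow zero_upper_tri diag_mat_apply fun_eq_iff)
  then show ?thesis unfolding nilpotents_def using s by (auto intro: diag_mat_closed)
qed

lemma NJ_symmetric_upper_tri:
  assumes NJ: "NJ_symmetric R"
  shows "NJ_symmetric (upper_tri n R)"
  unfolding NJ_symmetric_def
proof (intro ballI impI)
  interpret T: ring "upper_tri n R" by (rule ring_upper_tri)
  fix A B C
  assume A: "A \<in> carrier (upper_tri n R)" and B: "B \<in> carrier (upper_tri n R)"
    and C: "C \<in> carrier (upper_tri n R)"
    and nil: "A \<otimes>\<^bsub>upper_tri n R\<^esub> B \<otimes>\<^bsub>upper_tri n R\<^esub> C \<in> nilpotents (upper_tri n R)"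
  have "(B \<otimes>\<^bsub>upper_tri n R\<^esub> A \<otimes>\<^bsub>upper_tri n R\<^esub> C) i i \<in> jacobson R" if i: "i < n" for i
  proof -
    have "A i i \<otimes> B i i \<otimes> C i i \<in> nilpotents R"
      using upper_tri_nilpotent_diag[OF nil i]
      by (simp add: upper_tri_mult_diag[OF T.m_closed[OF A B] C i] upper_tri_mult_diag[OF A B i])
    then have "B i i \<otimes> A i i \<otimes> C i i \<in> jacobson R"
      using NJ upper_tri_entry_closed[OF A] upper_tri_entry_closed[OF B] upper_tri_entry_closed[OF C]
      unfolding NJ_symmetric_def by blast
    then show ?thesis
      by (simp add: upper_tri_mult_diag[OF T.m_closed[OF B A] C i] upper_tri_mult_diag[OF B A i])
  qed
  then show "B \<otimes>\<^bsub>upper_tri n R\<^esub> A \<otimes>\<^bsub>upper_tri n R\<^esub> C \<in> jacobson (upper_tri n R)"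
    using A B C by (simp add: jacobson_upper_tri)
qed

lemma NJ_symmetric_of_upper_tri:
  assumes NJ: "NJ_symmetric (upper_tri n R)" and n: "0 < n"
  shows "NJ_symmetric R"
  unfolding NJ_symmetric_def
proof (intro ballI impI)
  fix a b c
  assume a: "a \<in> carrier R" and b: "b \<in> carrier R" and c: "c \<in> carrier R"
    and nil: "a \<otimes> b \<otimes> c \<in> nilpotents R"
  let ?S = "\<lambda>x. diag_mat n R (\<lambda>_. x)"
  have S: "?S x \<in> carrier (upper_tri n R)" if "x \<in> carrier R" for x
    using that by (intro diag_mat_closed)
  have "?S a \<otimes>\<^bsub>upper_tri n R\<^esub> ?S b \<otimes>\<^bsub>upper_tri n R\<^esub> ?S c \<in> nilpotents (upper_tri n R)"
    using diag_mat_nilpotent[OF nil] a b c by (simp add: diag_mat_mult)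
  then have "?S b \<otimes>\<^bsub>upper_tri n R\<^esub> ?S a \<otimes>\<^bsub>upper_tri n R\<^esub> ?S c \<in> jacobson (upper_tri n R)"
    using NJ S[OF a] S[OF b] S[OF c] unfolding NJ_symmetric_def by blast
  then have "?S (b \<otimes> a \<otimes> c) 0 0 \<in> jacobson R"
    using a b c n by (simp add: diag_mat_mult jacobson_upper_tri)
  then show "b \<otimes> a \<otimes> c \<in> jacobson R" using n by (simp add: diag_mat_apply)
qed

end

theorem corollary2p23:
  fixes R :: "('a, 'b) ring_scheme" and n :: nat
  assumes "ring R" and "n \<ge> 1"
  shows "NJ_symmetric R \<longleftrightarrow> NJ_symmetric (upper_tri n R)"
proof -
  interpret ring R by (rule assms(1))
  show ?thesis using NJ_symmetric_upper_tri NJ_symmetric_of_upper_tri assms(2) by auto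
qed

end
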